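(* For any voter matrix $V$ with $t$ topics, there exists a proposal $p$ supported by $V$ with $R_p\ge \frac12-\frac1t$. In particular, $r_V\ge \frac23-\frac{4}{3t}$.
   Context: A voter matrix with $t$ topics is a matrix $V\in\{Y,N\}^{n\times t}$ for positive integers $n,t$ (rows are voters), subject to the standing assumption that in every column the number of entries $Y$ is at least the number of entries $N$. A proposal is a vector $p\in\{Y,N\}^t$. A voter $v$ supports $p$ if the Hamming distance between $v$ and $p$ is at most $t/2$; $p$ is supported by $V$ if at least $n/2$ rows of $V$ support $p$. For $i=1,\dots,t$ let $m_i$ be the fraction of entries $Y$ in column $i$ of $V$, and $m_V=\frac1t\sum_i m_i$. For a proposal $p$ let $m_i'=m_i$ if $p_i=Y$ and $m_i'=1-m_i$ if $p_i=N$; set $R_p=\frac1t\sum_i m_i'$ and $r_p=R_p/m_V$. $r_V$ is the maximum of $r_p$ over all proposals $p$ supported by $V$. *)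

theory Defs
  imports Complex_Main
begin

(* A voter matrix with n voters and t topics is V :: nat => nat => bool,
   V j i = True meaning voter j says Y on topic i (only j < n, i < t matter).
   A proposal is p :: nat => bool with p i = True meaning Y; proposals are
   normalised to be False outside {..<t}. *)

definition voter_matrix :: "nat \<Rightarrow> nat \<Rightarrow> (nat \<Rightarrow> nat \<Rightarrow> bool) \<Rightarrow> bool" where
  "voter_matrix n t V \<longleftrightarrow> 0 < n \<and> 0 < t \<and>
     (\<forall>i<t. card {j\<in>{..<n}. \<not> V j i} \<le> card {j\<in>{..<n}. V j i})"

definition proposals :: "nat \<Rightarrow> (nat \<Rightarrow> bool) set" where
  "proposals t = {p. \<forall>i\<ge>t. \<not> p i}"

definition hamming :: "nat \<Rightarrow> (nat \<Rightarrow> bool) \<Rightarrow> (nat \<Rightarrow> bool) \<Rightarrow> nat" where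
  "hamming t v p = card {i\<in>{..<t}. v i \<noteq> p i}"

definition supports :: "nat \<Rightarrow> (nat \<Rightarrow> bool) \<Rightarrow> (nat \<Rightarrow> bool) \<Rightarrow> bool" where
  "supports t v p \<longleftrightarrow> real (hamming t v p) \<le> real t / 2"

definition supported :: "nat \<Rightarrow> nat \<Rightarrow> (nat \<Rightarrow> nat \<Rightarrow> bool) \<Rightarrow> (nat \<Rightarrow> bool) \<Rightarrow> bool" where
  "supported n t V p \<longleftrightarrow> real (card {j\<in>{..<n}. supports t (V j) p}) \<ge> real n / 2"

definition mfrac :: "nat \<Rightarrow> (nat \<Rightarrow> nat \<Rightarrow> bool) \<Rightarrow> nat \<Rightarrow> real" where
  "mfrac n V i = real (card {j\<in>{..<n}. V j i}) / real n"

definition mV :: "nat \<Rightarrow> nat \<Rightarrow> (nat \<Rightarrow> nat \<Rightarrow> bool) \<Rightarrow> real" where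
  "mV n t V = (\<Sum>i<t. mfrac n V i) / real t"

definition Rp :: "nat \<Rightarrow> nat \<Rightarrow> (nat \<Rightarrow> nat \<Rightarrow> bool) \<Rightarrow> (nat \<Rightarrow> bool) \<Rightarrow> real" where
  "Rp n t V p = (\<Sum>i<t. if p i then mfrac n V i else 1 - mfrac n V i) / real t"

definition rp :: "nat \<Rightarrow> nat \<Rightarrow> (nat \<Rightarrow> nat \<Rightarrow> bool) \<Rightarrow> (nat \<Rightarrow> bool) \<Rightarrow> real" where
  "rp n t V p = Rp n t V p / mV n t V"

definition rV :: "nat \<Rightarrow> nat \<Rightarrow> (nat \<Rightarrow> nat \<Rightarrow> bool) \<Rightarrow> real" where
  "rV n t V = Max (rp n t V ` {p \<in> proposals t. supported n t V p})"

end

theory Submission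
  imports Defs
begin

(* A proposal and its complement on the t topics are at Hamming distances summing
   to t from every voter, so each voter supports one of them and one of the two is supported;
   their R-values add up to 1. Flipping the proposals "Y exactly on topics k, ..., t-1" one topic
   at a time moves R from m_V >= 1/2 (k = 0) to 1 - m_V <= 1/2 (k = t) in steps of at most 1/t,
   so some such proposal has R in [1/2, 1/2 + 1/t]; it or its complement is supported and has
   R >= 1/2 - 1/t. For the ratio: if m_V <= 3/4 this proposal gives r_p >= (1/2 - 1/t) / (3/4).
   If m_V > 3/4, the average distance of a voter from the all-Y proposal is t (1 - m_V) < t/4,
   so by Markov's inequality fewer than half of the voters are farther than t/2: the all-Y
   proposal is supported and has r_p = 1. *)

definition compl_proposal :: "nat \<Rightarrow> (nat \<Rightarrow> bool) \<Rightarrow> nat \<Rightarrow> bool" where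
  "compl_proposal t p = (\<lambda>i. i < t \<and> \<not> p i)"

definition yes_from :: "nat \<Rightarrow> nat \<Rightarrow> nat \<Rightarrow> bool" where
  "yes_from t k = (\<lambda>i. k \<le> i \<and> i < t)"

lemma compl_proposal_in_proposals: "compl_proposal t p \<in> proposals t"
  unfolding compl_proposal_def proposals_def by simp

lemma yes_from_in_proposals: "yes_from t k \<in> proposals t"
  unfolding yes_from_def proposals_def by simp

lemma finite_proposals: "finite (proposals t)"
proof (rule finite_subset)
  show "proposals t \<subseteq> (\<lambda>S i. i \<in> S) ` Pow {..<t}"
  proof
    fix p assume "p \<in> proposals t"
    then have "{i. p i} \<in> Pow {..<t}" unfolding proposals_def by (auto simp: not_le[symmetric])
    moreover have "p = (\<lambda>i. i \<in> {i. p i})" by simp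
    ultimately show "p \<in> (\<lambda>S i. i \<in> S) ` Pow {..<t}" by blast
  qed
qed simp

lemma card_filter_add_card_filter_not:
  "finite A \<Longrightarrow> card {x\<in>A. P x} + card {x\<in>A. \<not> P x} = card A"
  by (subst card_Un_disjoint[symmetric]) (auto intro: arg_cong[where f = card])

lemma card_gt_mult_le_sum:
  fixes h :: "'a \<Rightarrow> real"
  assumes "finite A" and "\<And>x. x \<in> A \<Longrightarrow> 0 \<le> h x"
  shows "real (card {x\<in>A. a < h x}) * a \<le> (\<Sum>x\<in>A. h x)"
proof -
  have "real (card {x\<in>A. a < h x}) * a = (\<Sum>x\<in>{x\<in>A. a < h x}. a)" by simp
  also have "\<dots> \<le> (\<Sum>x\<in>{x\<in>A. a < h x}. h x)" by (rule sum_mono) simp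
  also have "\<dots> \<le> (\<Sum>x\<in>A. h x)" by (rule sum_mono2) (use assms in auto)
  finally show ?thesis .
qed

lemma bounded_steps_crossing:
  fixes f :: "nat \<Rightarrow> real"
  assumes "c \<le> f 0" and "f m \<le> c" and "0 \<le> d" and "\<And>k. k < m \<Longrightarrow> f k \<le> f (Suc k) + d"
  shows "\<exists>k\<le>m. c \<le> f k \<and> f k \<le> c + d"
  using assms
proof (induction m arbitrary: f)
  case 0
  then show ?case by auto
next
  case (Suc m)
  show ?case
  proof (cases "c \<le> f 1")
    case True
    then obtain k where "k \<le> m" "c \<le> f (Suc k)" "f (Suc k) \<le> c + d"
      using Suc.IH[of "\<lambda>k. f (Suc k)"] Suc.prems by auto
    then show ?thesis by (intro exI[of _ "Suc k"]) auto
  next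
    case False
    then show ?thesis using Suc.prems(1) Suc.prems(4)[of 0] by auto
  qed
qed

lemma hamming_add_hamming_compl: "hamming t v p + hamming t v (compl_proposal t p) = t"
proof -
  have "{i\<in>{..<t}. v i \<noteq> compl_proposal t p i} = {i\<in>{..<t}. \<not> v i \<noteq> p i}"
    unfolding compl_proposal_def by auto
  then show ?thesis
    unfolding hamming_def using card_filter_add_card_filter_not[of "{..<t}" "\<lambda>i. v i \<noteq> p i"]
    by simp
qed

lemma supported_or_supported_compl:
  "supported n t V p \<or> supported n t V (compl_proposal t p)"
proof -
  let ?A = "{j\<in>{..<n}. supports t (V j) p}"
  let ?B = "{j\<in>{..<n}. supports t (V j) (compl_proposal t p)}"
  have "{..<n} \<subseteq> ?A \<union> ?B"
  proof
    fix j assume "j \<in> {..<n}"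
    moreover have "real (hamming t (V j) p) + real (hamming t (V j) (compl_proposal t p)) = real t"
      using hamming_add_hamming_compl by (metis of_nat_add)
    ultimately show "j \<in> ?A \<union> ?B" unfolding supports_def by auto
  qed
  then have "n \<le> card (?A \<union> ?B)" using card_mono[of "?A \<union> ?B" "{..<n}"] by simp
  also have "\<dots> \<le> card ?A + card ?B" by (rule card_Un_le)
  finally show ?thesis unfolding supported_def by linarith
qed

lemma card_yes_votes: "0 < n \<Longrightarrow> real (card {j\<in>{..<n}. V j i}) = real n * mfrac n V i"
  unfolding mfrac_def by simp

lemma card_no_votes:
  assumes "0 < n"
  shows "real (card {j\<in>{..<n}. \<not> V j i}) = real n * (1 - mfrac n V i)"
proof -
  have "real (card {j\<in>{..<n}. \<not> V j i}) = real n - real (card {j\<in>{..<n}. V j i})"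
    using card_filter_add_card_filter_not[of "{..<n}" "\<lambda>j. V j i"] by (simp flip: of_nat_add)
  then show ?thesis using card_yes_votes[OF assms] by (simp add: algebra_simps)
qed

lemma
  assumes "voter_matrix n t V" and "i < t"
  shows mfrac_ge_half: "1/2 \<le> mfrac n V i"
    and mfrac_le_one: "mfrac n V i \<le> 1"
proof -
  have n: "0 < n" using assms(1) unfolding voter_matrix_def by simp
  have "real (card {j\<in>{..<n}. \<not> V j i}) \<le> real (card {j\<in>{..<n}. V j i})"
    using assms unfolding voter_matrix_def by simp
  then have "real n * (1 - mfrac n V i) \<le> real n * mfrac n V i"
    unfolding card_no_votes[OF n, of V i] card_yes_votes[OF n, of V i] .
  then have "1 - mfrac n V i \<le> mfrac n V i" by (rule mult_left_le_imp_le) (use n in simp)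
  then show "1/2 \<le> mfrac n V i" by simp
  have "0 \<le> real n * (1 - mfrac n V i)" by (metis card_no_votes[OF n] of_nat_0_le_iff)
  then show "mfrac n V i \<le> 1" using n by (simp add: zero_le_mult_iff)
qed

lemma mV_ge_half:
  assumes "voter_matrix n t V"
  shows "1/2 \<le> mV n t V"
proof -
  have t: "0 < t" using assms unfolding voter_matrix_def by simp
  have "(\<Sum>i<t. 1/2) \<le> (\<Sum>i<t. mfrac n V i)"
    by (intro sum_mono mfrac_ge_half[OF assms]) simp
  then show ?thesis unfolding mV_def using t by (simp add: field_simps)
qed

lemma Rp_nonneg:
  assumes "voter_matrix n t V"
  shows "0 \<le> Rp n t V p"
  unfolding Rp_def using mfrac_ge_half[OF assms] mfrac_le_one[OF assms]
  by (force intro: divide_nonneg_nonneg sum_nonneg)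

lemma Rp_compl_proposal:
  assumes "0 < t"
  shows "Rp n t V (compl_proposal t p) = 1 - Rp n t V p"
proof -
  have "(\<Sum>i<t. if compl_proposal t p i then mfrac n V i else 1 - mfrac n V i)
      = (\<Sum>i<t. 1 - (if p i then mfrac n V i else 1 - mfrac n V i))"
    unfolding compl_proposal_def by (rule sum.cong) auto
  then show ?thesis unfolding Rp_def using assms by (simp add: sum_subtractf field_simps)
qed

lemma Rp_yes_from_0: "Rp n t V (yes_from t 0) = mV n t V"
  unfolding Rp_def mV_def yes_from_def by (auto intro: arg_cong[where f = "\<lambda>x. x / real t"] sum.cong)

lemma Rp_yes_from_t: "0 < t \<Longrightarrow> Rp n t V (yes_from t t) = 1 - mV n t V"
  unfolding Rp_def mV_def yes_from_def by (simp add: sum_subtractf field_simps)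

lemma Rp_yes_from_step:
  assumes "voter_matrix n t V" and "k < t"
  shows "Rp n t V (yes_from t k) \<le> Rp n t V (yes_from t (Suc k)) + 1 / real t"
proof -
  let ?f = "\<lambda>k i. if yes_from t k i then mfrac n V i else 1 - mfrac n V i"
  have "(\<Sum>i<t. ?f k i) - (\<Sum>i<t. ?f (Suc k) i) = (\<Sum>i<t. ?f k i - ?f (Suc k) i)"
    by (simp add: sum_subtractf)
  also have "\<dots> = (\<Sum>i<t. if i = k then 2 * mfrac n V k - 1 else 0)"
    by (rule sum.cong) (auto simp: yes_from_def)
  also have "\<dots> \<le> 1" using assms(2) mfrac_le_one[OF assms] by simp
  finally show ?thesis unfolding Rp_def using assms(2) by (simp add: field_simps)
qed

lemma exists_supported_Rp_ge:
  assumes V: "voter_matrix n t V"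
  shows "\<exists>p\<in>proposals t. supported n t V p \<and> 1/2 - 1 / real t \<le> Rp n t V p"
proof -
  have t: "0 < t" using V unfolding voter_matrix_def by simp
  obtain k where "k \<le> t" and k: "1/2 \<le> Rp n t V (yes_from t k)"
    "Rp n t V (yes_from t k) \<le> 1/2 + 1 / real t"
    using bounded_steps_crossing[of "1/2" "\<lambda>k. Rp n t V (yes_from t k)" t "1 / real t"]
      Rp_yes_from_0 Rp_yes_from_t[OF t] mV_ge_half[OF V] Rp_yes_from_step[OF V]
    by auto
  show ?thesis
  proof (cases "supported n t V (yes_from t k)")
    case True
    moreover have "0 \<le> 1 / real t" by simp
    then have "1/2 - 1 / real t \<le> Rp n t V (yes_from t k)" using k(1) by linarith
    ultimately show ?thesis using yes_from_in_proposals by blast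
  next
    case False
    then show ?thesis
      using supported_or_supported_compl[of n t V "yes_from t k"] k(2)
        Rp_compl_proposal[OF t] compl_proposal_in_proposals
      by (intro bexI[of _ "compl_proposal t (yes_from t k)"]) auto
  qed
qed

lemma sum_hamming_yes_from_0:
  assumes "voter_matrix n t V"
  shows "(\<Sum>j<n. real (hamming t (V j) (yes_from t 0))) = real n * real t * (1 - mV n t V)"
proof -
  have n: "0 < n" and t: "0 < t" using assms unfolding voter_matrix_def by simp_all
  have "hamming t v (yes_from t 0) = card {i\<in>{..<t}. \<not> v i}" for v
    unfolding hamming_def yes_from_def by (rule arg_cong[where f = card]) auto
  then have "(\<Sum>j<n. real (hamming t (V j) (yes_from t 0))) = (\<Sum>j<n. \<Sum>i<t. of_bool (\<not> V j i))"
    by (simp add: Int_def)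
  also have "\<dots> = (\<Sum>i<t. real (card {j\<in>{..<n}. \<not> V j i}))"
    by (subst sum.swap) (simp add: Int_def)
  also have "\<dots> = (\<Sum>i<t. real n * (1 - mfrac n V i))"
    unfolding card_no_votes[OF n] ..
  also have "\<dots> = real n * real t * (1 - mV n t V)"
    unfolding mV_def using t by (simp add: sum_subtractf sum_distrib_left[symmetric] field_simps)
  finally show ?thesis .
qed

lemma yes_from_0_supported:
  assumes V: "voter_matrix n t V" and "3/4 < mV n t V"
  shows "supported n t V (yes_from t 0)"
proof -
  have n: "0 < n" and t: "0 < t" using V unfolding voter_matrix_def by simp_all
  let ?h = "\<lambda>j. real (hamming t (V j) (yes_from t 0))"
  let ?far = "{j\<in>{..<n}. real t / 2 < ?h j}"
  have "real (card ?far) * (real t / 2) \<le> real n * real t * (1 - mV n t V)"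
    using card_gt_mult_le_sum[of "{..<n}" ?h "real t / 2"] sum_hamming_yes_from_0[OF V] by simp
  also have "\<dots> < real n * real t / 4" using assms(2) n t by simp
  finally have "real (card ?far) < real n / 2" using t by (simp add: field_simps)
  moreover have "card {j\<in>{..<n}. supports t (V j) (yes_from t 0)} + card ?far = n"
    using card_filter_add_card_filter_not[of "{..<n}" "\<lambda>j. supports t (V j) (yes_from t 0)"]
    unfolding supports_def by (simp add: not_le)
  ultimately show ?thesis unfolding supported_def by linarith
qed

lemma rp_le_rV:
  assumes "p \<in> proposals t" and "supported n t V p"
  shows "rp n t V p \<le> rV n t V"
  unfolding rV_def using assms finite_proposals by (intro Max_ge) auto

theorem lemma5p2:
  fixes n t :: nat and V :: "nat \<Rightarrow> nat \<Rightarrow> bool"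
  assumes "voter_matrix n t V"
  shows "(\<exists>p\<in>proposals t. supported n t V p \<and> Rp n t V p \<ge> 1/2 - 1 / real t)
         \<and> rV n t V \<ge> 2/3 - 4 / (3 * real t)"
proof
  show "\<exists>p\<in>proposals t. supported n t V p \<and> Rp n t V p \<ge> 1/2 - 1 / real t"
    using exists_supported_Rp_ge[OF assms] .
  then obtain p where p: "p \<in> proposals t" "supported n t V p" "1/2 - 1 / real t \<le> Rp n t V p"
    by blast
  have t: "0 < t" using assms unfolding voter_matrix_def by simp
  have mV: "1/2 \<le> mV n t V" using mV_ge_half[OF assms] .
  show "rV n t V \<ge> 2/3 - 4 / (3 * real t)"
  proof (cases "mV n t V \<le> 3/4")
    case True
    have "2/3 - 4 / (3 * real t) = (1/2 - 1 / real t) / (3/4)" by (simp add: field_simps)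
    also have "\<dots> \<le> Rp n t V p / (3/4)" using p(3) by (simp add: divide_right_mono)
    also have "\<dots> \<le> rp n t V p"
      unfolding rp_def using Rp_nonneg[OF assms] True mV by (intro divide_left_mono) auto
    also have "\<dots> \<le> rV n t V" using rp_le_rV p(1,2) .
    finally show ?thesis .
  next
    case False
    have "2/3 - 4 / (3 * real t) \<le> 1" using t by (simp add: field_simps)
    also have "\<dots> = rp n t V (yes_from t 0)" unfolding rp_def Rp_yes_from_0 using mV by simp
    also have "\<dots> \<le> rV n t V"
      using rp_le_rV yes_from_in_proposals yes_from_0_supported[OF assms] False by simp
    finally show ?thesis .
  qed
qed

end
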